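(* Let $(X_1(t))_{t\ge 0}$ be an arbitrary real-valued stochastic process (no distributional or path assumptions beyond being real-valued), let $u_0\ge 0$, $c_0\ge 0$ and $k>0$. Put $$I_1(t)=-\min\Big(\inf_{0\le s\le t}X_1(s),\,0\Big),\qquad X_0(t)=u_0+c_0t-k\,I_1(t),$$ $$\tau_0=\inf\{t\ge 0: X_0(t)<0\},\qquad X(t)=u_0+c_0t+k\,X_1(t),\qquad \tau=\inf\{t\ge 0: X(t)<0\}.$$ Then $\tau_0=\tau$ pathwise (hence almost surely). In particular, if $X_1(t)=u_1+c_1t-S_1(t)$ for some process $S_1$, then $$\tau_0=\inf\Big\{t\ge 0:\ \tfrac{u_0}{k}+u_1+\big(\tfrac{c_0}{k}+c_1\big)t-S_1(t)<0\Big\},$$ so that for every $t>0$, $\Psi(t,\mathbf u,\mathbf c):=P(\tau_0<t)=\Psi_1\big(t;\,u_0/k+u_1,\,c_0/k+c_1\big)$, where $\Psi_1(t;u,c):=P\big(\inf\{s\ge0: u+cs-S_1(s)<0\}<t\big)$ is the finite-time ruin probability of the subsidiary with initial reserve $u$ and premium rate $c$.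
   Context: Central branch (CB) network with one subsidiary: the subsidiary reserve process $X_1$ is kept nonnegative by minimal (Skorokhod) regulation, the cumulative bail-out amount being the regulator $I_1$; the CB, whose reserve in isolation is the deterministic drift $u_0+c_0t$, pays a proportional cost $k$ per unit of bail-out, so its reserve is $X_0(t)=u_0+c_0t-kI_1(t)$. The ruin time of the network is the ruin time $\tau_0$ of the CB. $X$ is the "pooled assets" process. *)

theory Defs
  imports "HOL-Probability.Probability"
begin

text \<open>Paths are functions of time t (only t \<ge> 0 matters). Infima of possibly
unbounded-below sets are taken in the extended reals, and inf of the empty set is +\<infinity>.\<close>

definition ruin_time :: "(real \<Rightarrow> ereal) \<Rightarrow> ereal" where
  "ruin_time Y = Inf (ereal ` {t. 0 \<le> t \<and> Y t < 0})"

definition bailout :: "(real \<Rightarrow> real) \<Rightarrow> real \<Rightarrow> ereal" where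
  "bailout X1 t = - min (INF s\<in>{0..t}. ereal (X1 s)) 0"

definition cb_reserve :: "real \<Rightarrow> real \<Rightarrow> real \<Rightarrow> (real \<Rightarrow> real) \<Rightarrow> real \<Rightarrow> ereal" where
  "cb_reserve u0 c0 k X1 t = ereal (u0 + c0 * t) - ereal k * bailout X1 t"

definition pooled :: "real \<Rightarrow> real \<Rightarrow> real \<Rightarrow> (real \<Rightarrow> real) \<Rightarrow> real \<Rightarrow> real" where
  "pooled u0 c0 k X1 t = u0 + c0 * t + k * X1 t"

definition subsid_ruin_prob ::
  "'a measure \<Rightarrow> (real \<Rightarrow> 'a \<Rightarrow> real) \<Rightarrow> real \<Rightarrow> real \<Rightarrow> real \<Rightarrow> real" where
  "subsid_ruin_prob M S1 t u c =
     measure M {\<omega> \<in> space M. ruin_time (\<lambda>s. ereal (u + c * s - S1 s \<omega>)) < ereal t}"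

end

theory Submission
  imports Defs
begin

text \<open>The CB is ruined at time t iff X1(s) < -(u0 + c0 t)/k for some s \<le> t. Since
u0 + c0 t is nondecreasing, at that s already X(s) = u0 + c0 s + k X1(s) < 0; conversely
X(t) < 0 forces X0(t) < 0. So every CB ruin instant is preceded by a ruin instant of the
pooled process and vice versa, and the two first-passage times coincide. Writing
X1 = u1 + c1 t - S1 and dividing X by k yields the subsidiary's surplus process with
initial reserve u0/k + u1 and premium rate c0/k + c1.\<close>

lemma ruin_time_cong:
  assumes "\<And>t. 0 \<le> t \<Longrightarrow> Y t < 0 \<longleftrightarrow> Z t < 0"
  shows "ruin_time Y = ruin_time Z"
  unfolding ruin_time_def using assms by (metis (mono_tags, lifting))

lemma ereal_diff_mult_neg_part_less_0_iff:
  fixes a k :: real and m :: ereal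
  assumes "a \<ge> 0" "k > 0"
  shows "ereal a - ereal k * - min m 0 < 0 \<longleftrightarrow> m < ereal (- a / k)"
proof (cases m)
  case (real r)
  show ?thesis
  proof (cases "r \<le> 0")
    case True
    then have "ereal a - ereal k * - min m 0 = ereal (a + k * r)" using real by simp
    then show ?thesis using real assms by (simp add: field_simps, linarith)
  next
    case False
    have "- a / k \<le> 0" using assms by simp
    then have "\<not> r < - a / k" using False by linarith
    then show ?thesis using real False assms by (simp add: min_def)
  qed
qed (use assms in auto)

lemma cb_reserve_less_0_iff:
  assumes "0 \<le> t" "u0 \<ge> 0" "c0 \<ge> 0" "k > 0"
  shows "cb_reserve u0 c0 k X1 t < 0 \<longleftrightarrow> (\<exists>s\<in>{0..t}. X1 s < - (u0 + c0 * t) / k)"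
proof -
  have "u0 + c0 * t \<ge> 0" using assms by simp
  then have "cb_reserve u0 c0 k X1 t < 0 \<longleftrightarrow>
      (INF s\<in>{0..t}. ereal (X1 s)) < ereal (- (u0 + c0 * t) / k)"
    unfolding cb_reserve_def bailout_def
    using ereal_diff_mult_neg_part_less_0_iff assms(4) by blast
  also have "\<dots> \<longleftrightarrow> (\<exists>s\<in>{0..t}. X1 s < - (u0 + c0 * t) / k)"
    by (simp add: INF_less_iff)
  finally show ?thesis .
qed

lemma ruin_time_cb_reserve_eq_pooled:
  assumes "u0 \<ge> 0" "c0 \<ge> 0" "k > 0"
  shows "ruin_time (cb_reserve u0 c0 k X1) = ruin_time (\<lambda>t. ereal (pooled u0 c0 k X1 t))"
proof -
  define A0 where "A0 = {t. 0 \<le> t \<and> cb_reserve u0 c0 k X1 t < 0}"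
  define A where "A = {t. 0 \<le> t \<and> pooled u0 c0 k X1 t < 0}"
  have pooled_ruin_in_A0: "t \<in> A0" if "t \<in> A" for t
  proof -
    from that have t: "0 \<le> t" "u0 + c0 * t + k * X1 t < 0" by (auto simp: A_def pooled_def)
    then have "X1 t < - (u0 + c0 * t) / k" using assms by (simp add: field_simps)
    then show ?thesis using cb_reserve_less_0_iff[OF t(1) assms] t(1) by (auto simp: A0_def)
  qed
  have A0_preceded_by_A: "\<exists>s\<in>A. s \<le> t" if "t \<in> A0" for t
  proof -
    from that have t: "0 \<le> t" "cb_reserve u0 c0 k X1 t < 0" by (auto simp: A0_def)
    then obtain s where s: "s \<in> {0..t}" "X1 s < - (u0 + c0 * t) / k"
      using cb_reserve_less_0_iff[OF t(1) assms] by auto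
    have "k * X1 s < - (u0 + c0 * t)" using s(2) assms by (simp add: field_simps)
    moreover have "c0 * s \<le> c0 * t" using s(1) assms by (simp add: mult_left_mono)
    ultimately have "u0 + c0 * s + k * X1 s < 0" by linarith
    then show ?thesis using s(1) by (auto simp: A_def pooled_def)
  qed
  have "(INF t\<in>A0. ereal t) = (INF t\<in>A. ereal t)"
    by (rule INF_eq) (use pooled_ruin_in_A0 A0_preceded_by_A in auto)
  then show ?thesis unfolding ruin_time_def A0_def A_def by simp
qed

lemma ruin_time_cb_reserve_eq_rescaled:
  assumes "u0 \<ge> 0" "c0 \<ge> 0" "k > 0"
    and X1: "\<And>t. 0 \<le> t \<Longrightarrow> X1 t = u1 + c1 * t - S1 t"
  shows "ruin_time (cb_reserve u0 c0 k X1)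
       = ruin_time (\<lambda>t. ereal (u0 / k + u1 + (c0 / k + c1) * t - S1 t))"
  unfolding ruin_time_cb_reserve_eq_pooled[OF assms(1-3)]
proof (rule ruin_time_cong)
  fix t :: real assume "0 \<le> t"
  then have "pooled u0 c0 k X1 t = u0 + c0 * t + k * (u1 + c1 * t - S1 t)"
    unfolding pooled_def by (simp add: X1)
  also have "\<dots> = k * (u0 / k + u1 + (c0 / k + c1) * t - S1 t)"
    using assms(3) by (simp add: field_simps)
  finally have "pooled u0 c0 k X1 t = k * (u0 / k + u1 + (c0 / k + c1) * t - S1 t)" .
  then show "ereal (pooled u0 c0 k X1 t) < 0 \<longleftrightarrow>
      ereal (u0 / k + u1 + (c0 / k + c1) * t - S1 t) < 0"
    using assms(3) by (simp add: mult_less_0_iff)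
qed

theorem mainTheorem1:
  fixes M :: "'a measure" and X1 :: "real \<Rightarrow> 'a \<Rightarrow> real"
    and u0 c0 k :: real
  assumes "prob_space M" and "u0 \<ge> 0" and "c0 \<ge> 0" and "k > 0"
  shows "(\<forall>\<omega>. ruin_time (cb_reserve u0 c0 k (\<lambda>t. X1 t \<omega>))
              = ruin_time (\<lambda>t. ereal (pooled u0 c0 k (\<lambda>t. X1 t \<omega>) t)))
       \<and> (\<forall>u1 c1 (S1 :: real \<Rightarrow> 'a \<Rightarrow> real).
            (\<forall>t \<omega>. 0 \<le> t \<longrightarrow> X1 t \<omega> = u1 + c1 * t - S1 t \<omega>) \<longrightarrow>
              (\<forall>\<omega>. ruin_time (cb_reserve u0 c0 k (\<lambda>t. X1 t \<omega>))
                   = ruin_time (\<lambda>t. ereal (u0 / k + u1 + (c0 / k + c1) * t - S1 t \<omega>)))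
            \<and> (\<forall>t > 0. measure M {\<omega> \<in> space M.
                   ruin_time (cb_reserve u0 c0 k (\<lambda>t. X1 t \<omega>)) < ereal t}
                 = subsid_ruin_prob M S1 t (u0 / k + u1) (c0 / k + c1)))"
proof (intro conjI allI impI)
  fix \<omega>
  show "ruin_time (cb_reserve u0 c0 k (\<lambda>t. X1 t \<omega>))
      = ruin_time (\<lambda>t. ereal (pooled u0 c0 k (\<lambda>t. X1 t \<omega>) t))"
    using ruin_time_cb_reserve_eq_pooled assms(2-4) by blast
next
  fix u1 c1 and S1 :: "real \<Rightarrow> 'a \<Rightarrow> real"
  assume X1: "\<forall>t \<omega>. 0 \<le> t \<longrightarrow> X1 t \<omega> = u1 + c1 * t - S1 t \<omega>"
  have rescaled: "ruin_time (cb_reserve u0 c0 k (\<lambda>t. X1 t \<omega>))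
      = ruin_time (\<lambda>t. ereal (u0 / k + u1 + (c0 / k + c1) * t - S1 t \<omega>))" for \<omega>
    by (rule ruin_time_cb_reserve_eq_rescaled[OF assms(2-4)]) (use X1 in blast)
  then show "ruin_time (cb_reserve u0 c0 k (\<lambda>t. X1 t \<omega>))
      = ruin_time (\<lambda>t. ereal (u0 / k + u1 + (c0 / k + c1) * t - S1 t \<omega>))" for \<omega> .
  fix t :: real
  show "measure M {\<omega> \<in> space M. ruin_time (cb_reserve u0 c0 k (\<lambda>t. X1 t \<omega>)) < ereal t}
      = subsid_ruin_prob M S1 t (u0 / k + u1) (c0 / k + c1)"
    unfolding subsid_ruin_prob_def rescaled ..
qed

end
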